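(* Let $\mathcal{H}\subseteq\mathbb{R}^n$ be an affine subspace (not necessarily generic) and let $\mathcal{P}=[0,1]^n\cap\mathcal{H}$, with vertex set $V$. Then there exist Bernstein polynomials $P_v(x)$, one for each vertex $v\in V$, such that the Bernoulli race over the Bernstein polynomials $\{P_v\}_{v\in V}$ is a Bernoulli factory for $\mathcal{P}$.
   Context: A Bernstein monomial is $\prod_{i=1}^n x_i^{a_i}(1-x_i)^{b_i}$ with nonnegative integers $a_i,b_i$; a Bernstein polynomial is a finite combination $\sum_j c_jM_j(x)$ of Bernstein monomials with positive coefficients $c_j$. A Bernoulli factory with output set $V$ (for inputs $x\in[0,1]^n$) is a (possibly infinite) rooted binary tree whose internal nodes are labeled by an index $i\in[n]$ or a known constant $c\in(0,1)$ and whose leaves are labeled by elements of $V$; on input $x$ one walks from the root, at a node labeled $i$ flipping a fresh independent coin that is $1$ with probability $x_i$ (an $x_i$-coin), at a node labeled $c$ a fresh coin of bias $c$, following the edge labeled by the outcome, and outputs the label of the leaf reached; $\mathcal{F}(x)$ is the output ($\emptyset$ if no leaf is reached). A Bernoulli factory for the polytope $\mathcal{P}$ is such a factory with output set $V$ that terminates almost surely (i.e. $\Pr[\mathcal{F}(x)=\emptyset]=0$) and satisfies $\mathbb{E}[\mathcal{F}(x)]=x$ for all $x\in\mathcal{P}\cap(0,1)^n$. The Bernoulli race over Bernstein polynomials $\{P_v\}_{v\in V}$ is the following factory: fix a constant $C\ge1$ at least the sum of the coefficients of every $P_v$. In each round, pick $v\in V$ uniformly at random; writing $P_v=\sum_j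 c_jM_j$, select monomial $M_j$ with probability $c_j/C$ (with the remaining probability select none, which counts as failure); if $M_j=\prod_i x_i^{a_i}(1-x_i)^{b_i}$ is selected, flip the $x_i$-coin $a_i+b_i$ times for each $i$, and declare success iff for every $i$ the first $a_i$ flips are $1$ and the next $b_i$ flips are $0$. On success output $v$; otherwise start a new round. *)

theory Defs
  imports "HOL-Analysis.Analysis" "HOL-Probability.Probability"
begin

text \<open>Inputs live in real ^ 'n (coordinates indexed by a finite type 'n, i.e. n = CARD('n)).
A Bernstein monomial prod_i x_i^(a i) (1 - x_i)^(b i) is represented by its exponent pair (a, b);
a Bernstein polynomial by the list of its terms (c_j, (a_j, b_j)) with positive coefficients c_j.\<close>

type_synonym 'n bmono = "('n \<Rightarrow> nat) \<times> ('n \<Rightarrow> nat)"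
type_synonym 'n bpoly = "(real \<times> 'n bmono) list"

definition bmono_eval :: "'n::finite bmono \<Rightarrow> real ^ 'n \<Rightarrow> real" where
  "bmono_eval m x = (\<Prod>i\<in>UNIV. (x $ i) ^ (fst m i) * (1 - x $ i) ^ (snd m i))"

definition bpoly_eval :: "'n::finite bpoly \<Rightarrow> real ^ 'n \<Rightarrow> real" where
  "bpoly_eval p x = (\<Sum>(c, m)\<leftarrow>p. c * bmono_eval m x)"

definition is_bernstein_poly :: "'n::finite bpoly \<Rightarrow> bool" where
  "is_bernstein_poly p \<longleftrightarrow> (\<forall>(c, m)\<in>set p. c > 0)"

definition coeff_sum :: "'n::finite bpoly \<Rightarrow> real" where
  "coeff_sum p = (\<Sum>(c, m)\<leftarrow>p. c)"

text \<open>Select the j-th monomial with probability c_j / C (None = no monomial selected,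
with the remaining probability 1 - (sum_j c_j) / C), realised by sequential coin choices.\<close>
fun select_monomial :: "real \<Rightarrow> (real \<times> 'm) list \<Rightarrow> 'm option pmf" where
  "select_monomial C [] = return_pmf None"
| "select_monomial C ((c, m) # ms) =
     bind_pmf (bernoulli_pmf (c / C))
       (\<lambda>b. if b then return_pmf (Some m) else select_monomial (C - c) ms)"

fun flip_pattern :: "real \<Rightarrow> bool list \<Rightarrow> bool pmf" where
  "flip_pattern p [] = return_pmf True"
| "flip_pattern p (t # ts) =
     bind_pmf (bernoulli_pmf p) (\<lambda>c. map_pmf (\<lambda>s. c = t \<and> s) (flip_pattern p ts))"

definition monomial_test :: "real ^ 'n \<Rightarrow> ('n::finite) bmono \<Rightarrow> bool pmf" where
  "monomial_test x m =
     map_pmf (\<lambda>f. \<forall>i. f i)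
       (Pi_pmf UNIV True (\<lambda>i. flip_pattern (x $ i) (replicate (fst m i) True @ replicate (snd m i) False)))"

definition race_round ::
  "(real ^ 'n) set \<Rightarrow> (real ^ 'n \<Rightarrow> ('n::finite) bpoly) \<Rightarrow> real \<Rightarrow> real ^ 'n \<Rightarrow> (real ^ 'n) option pmf" where
  "race_round V P C x =
     bind_pmf (pmf_of_set V) (\<lambda>v.
       bind_pmf (select_monomial C (P v)) (\<lambda>sel.
         case sel of
           None \<Rightarrow> return_pmf None
         | Some m \<Rightarrow> map_pmf (\<lambda>ok. if ok then Some v else None) (monomial_test x m)))"

text \<open>The Bernoulli race: repeat rounds until success. Its output distribution is a
subprobability distribution; missing mass = probability of non-termination.\<close>
partial_function (spmf) bernoulli_race ::
  "(real ^ 'n) set \<Rightarrow> (real ^ 'n \<Rightarrow> ('n::finite) bpoly) \<Rightarrow> real \<Rightarrow> real ^ 'n \<Rightarrow> (real ^ 'n) spmf" where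
  "bernoulli_race V P C x =
     bind_pmf (race_round V P C x) (\<lambda>r.
       case r of Some v \<Rightarrow> return_spmf v | None \<Rightarrow> bernoulli_race V P C x)"

text \<open>The factory is given by its output (sub)distribution F x on V.\<close>
definition unit_open_cube :: "(real ^ 'n::finite) set" where
  "unit_open_cube = {x. \<forall>i. 0 < x $ i \<and> x $ i < 1}"

definition unit_cube :: "(real ^ 'n::finite) set" where
  "unit_cube = {x. \<forall>i. 0 \<le> x $ i \<and> x $ i \<le> 1}"

definition is_bernoulli_factory_for ::
  "(real ^ 'n::finite) set \<Rightarrow> (real ^ 'n) set \<Rightarrow> (real ^ 'n \<Rightarrow> (real ^ 'n) spmf) \<Rightarrow> bool" where
  "is_bernoulli_factory_for Pol V F \<longleftrightarrow>
     (\<forall>x\<in>Pol \<inter> unit_open_cube.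
        lossless_spmf (F x) \<and> set_spmf (F x) \<subseteq> V \<and>
        (\<Sum>v\<in>V. spmf (F x) v *\<^sub>R v) = x)"

end

theory Submission
  imports Defs
begin

(* For x in the open cube, the cube vertices u weighted by the Bernstein monomials
   prod_i x_i^(u_i) (1 - x_i)^(1 - u_i), i.e. by the product Bernoulli distribution, have
   barycentre x. A hyperplane phi z = 0 through x (phi affine) is then enforced without losing
   this: every point y with phi y >= 0 is paired with every point z with phi z < 0, and the pair
   is replaced by the point where the segment yz crosses the hyperplane, with weight
   (phi y - phi z) p(x) q(x). Because the weighted sum of phi over the family vanishes at x, the
   barycentre is still x, and products and positive multiples of Bernstein polynomials are again
   Bernstein polynomials. After cutting by the finitely many hyperplanes defining H all points lie
   in the polytope, and writing each as a convex combination of the vertices gives Bernstein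
   polynomials P_v with sum_v P_v(x) v = (sum_v P_v(x)) x and sum_v P_v(x) > 0. The Bernoulli
   race outputs v with probability P_v(x) / sum_w P_w(x), so its mean is x. *)

lemma sum_list_concat_map: "(\<Sum>y\<leftarrow>concat (map g xs). f y) = (\<Sum>x\<leftarrow>xs. \<Sum>y\<leftarrow>g x. f y)"
  by (induct xs) auto

lemma sum_sum_list_swap: "(\<Sum>v\<in>V. \<Sum>x\<leftarrow>xs. f v x) = (\<Sum>x\<leftarrow>xs. \<Sum>v\<in>V. f v x)"
  by (induct xs) (simp_all add: sum.distrib)

lemma scaleR_sum_list_left: "(\<Sum>x\<leftarrow>xs. f x) *\<^sub>R (v :: 'a::real_vector) = (\<Sum>x\<leftarrow>xs. f x *\<^sub>R v)"
  by (induct xs) (simp_all add: scaleR_left_distrib)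

lemma scaleR_sum_list_right: "c *\<^sub>R (\<Sum>x\<leftarrow>xs. f x :: 'a::real_vector) = (\<Sum>x\<leftarrow>xs. c *\<^sub>R f x)"
  by (induct xs) (simp_all add: scaleR_right_distrib)

lemma inner_sum_list_right: "a \<bullet> (\<Sum>x\<leftarrow>xs. f x) = (\<Sum>x\<leftarrow>xs. a \<bullet> f x)"
  by (induct xs) (simp_all add: inner_add_right)

lemma sum_list_filter_sign_split:
  fixes g :: "'a \<Rightarrow> real" and f :: "'a \<Rightarrow> 'b::comm_monoid_add"
  shows "(\<Sum>x\<leftarrow>filter (\<lambda>x. 0 \<le> g x) xs. f x) + (\<Sum>x\<leftarrow>filter (\<lambda>x. g x < 0) xs. f x) = (\<Sum>x\<leftarrow>xs. f x)"
proof -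
  have "(if 0 \<le> g x then f x else 0) + (if g x < 0 then f x else 0) = f x" for x
    by auto
  then show ?thesis
    by (simp add: sum_list_map_filter' sum_list_addf[symmetric])
qed

lemma sum_list_eq_0_signs:
  fixes f :: "'a \<Rightarrow> real"
  assumes "(\<Sum>x\<leftarrow>xs. f x) = 0" and "\<exists>x\<in>set xs. f x \<noteq> 0"
  shows "\<exists>x\<in>set xs. 0 < f x" and "\<exists>x\<in>set xs. f x < 0"
proof -
  have neg: "\<exists>x\<in>set xs. g x < 0"
    if "(\<Sum>x\<leftarrow>xs. g x) = 0" "\<exists>x\<in>set xs. g x \<noteq> 0" for g :: "'a \<Rightarrow> real"
  proof (rule ccontr)
    assume "\<not> (\<exists>x\<in>set xs. g x < 0)"
    then have "\<forall>x\<in>set xs. g x = 0"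
      using that(1) sum_list_nonneg_eq_0_iff[of "map g xs"] by (force simp: not_less)
    then show False
      using that(2) by blast
  qed
  show "\<exists>x\<in>set xs. f x < 0"
    using neg assms by blast
  have "(\<Sum>x\<leftarrow>xs. - f x) = 0"
    using assms(1) uminus_sum_list_map[of f xs] by (simp add: comp_def)
  then show "\<exists>x\<in>set xs. 0 < f x"
    using neg[of "\<lambda>x. - f x"] assms(2) by auto
qed

section \<open>Bernstein polynomials\<close>

definition bmono_mult :: "'n bmono \<Rightarrow> 'n bmono \<Rightarrow> 'n bmono" where
  "bmono_mult m m' = (\<lambda>i. fst m i + fst m' i, \<lambda>i. snd m i + snd m' i)"

definition bpoly_mult :: "'n::finite bpoly \<Rightarrow> 'n bpoly \<Rightarrow> 'n bpoly" where
  "bpoly_mult p q = [(c * d, bmono_mult m n). (c, m) \<leftarrow> p, (d, n) \<leftarrow> q]"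

(* Scaling by 0 gives the empty polynomial, so every nonnegative factor keeps the
   coefficients positive. *)
definition bpoly_smult :: "real \<Rightarrow> 'n::finite bpoly \<Rightarrow> 'n bpoly" where
  "bpoly_smult r p = (if r = 0 then [] else [(r * c, m). (c, m) \<leftarrow> p])"

lemma bmono_eval_mult: "bmono_eval (bmono_mult m m') x = bmono_eval m x * bmono_eval m' x"
  unfolding bmono_eval_def bmono_mult_def by (simp add: power_add prod.distrib[symmetric] mult_ac)

lemma bpoly_eval_mult: "bpoly_eval (bpoly_mult p q) x = bpoly_eval p x * bpoly_eval q x"
proof -
  have "bpoly_eval (bpoly_mult p q) x =
      (\<Sum>(c, m)\<leftarrow>p. \<Sum>(d, n)\<leftarrow>q. c * bmono_eval m x * (d * bmono_eval n x))"
    by (simp add: bpoly_eval_def bpoly_mult_def sum_list_concat_map split_def comp_def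
        bmono_eval_mult mult_ac)
  also have "\<dots> = (\<Sum>(c, m)\<leftarrow>p. c * bmono_eval m x * bpoly_eval q x)"
    by (simp add: bpoly_eval_def split_def sum_list_const_mult)
  also have "\<dots> = bpoly_eval p x * bpoly_eval q x"
    by (simp add: bpoly_eval_def split_def sum_list_mult_const)
  finally show ?thesis .
qed

lemma bpoly_eval_smult: "bpoly_eval (bpoly_smult r p) x = r * bpoly_eval p x"
  unfolding bpoly_eval_def bpoly_smult_def
  by (simp add: split_def comp_def sum_list_const_mult[symmetric] mult_ac)

lemma bpoly_eval_concat: "bpoly_eval (concat ps) x = (\<Sum>p\<leftarrow>ps. bpoly_eval p x)"
  by (induct ps) (simp_all add: bpoly_eval_def)

lemma is_bernstein_poly_mult:
  "is_bernstein_poly p \<Longrightarrow> is_bernstein_poly q \<Longrightarrow> is_bernstein_poly (bpoly_mult p q)"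
  unfolding is_bernstein_poly_def bpoly_mult_def by (fastforce intro: mult_pos_pos)

lemma is_bernstein_poly_smult: "0 \<le> r \<Longrightarrow> is_bernstein_poly p \<Longrightarrow> is_bernstein_poly (bpoly_smult r p)"
  unfolding is_bernstein_poly_def bpoly_smult_def by auto

lemma is_bernstein_poly_concat:
  "(\<forall>p\<in>set ps. is_bernstein_poly p) \<Longrightarrow> is_bernstein_poly (concat ps)"
  unfolding is_bernstein_poly_def by auto

lemma bpoly_mult_eq_Nil_iff: "bpoly_mult p q = [] \<longleftrightarrow> p = [] \<or> q = []"
  unfolding bpoly_mult_def by (cases p; cases q) auto

lemma bpoly_smult_eq_Nil_iff: "bpoly_smult r p = [] \<longleftrightarrow> r = 0 \<or> p = []"
  unfolding bpoly_smult_def by auto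

lemma bmono_eval_pos: "x \<in> unit_open_cube \<Longrightarrow> 0 < bmono_eval m x"
  unfolding bmono_eval_def unit_open_cube_def by (intro prod_pos) auto

lemma bpoly_eval_pos:
  assumes "is_bernstein_poly p" "p \<noteq> []" "x \<in> unit_open_cube"
  shows "0 < bpoly_eval p x"
proof -
  have "(\<Sum>(c, m)\<leftarrow>p. 0) < (\<Sum>(c, m)\<leftarrow>p. c * bmono_eval m x)"
    using assms by (intro sum_list_strict_mono) (auto simp: is_bernstein_poly_def bmono_eval_pos)
  then show ?thesis
    by (simp add: bpoly_eval_def split_def)
qed

lemma unit_open_cube_subset: "unit_open_cube \<subseteq> unit_cube"
  by (auto simp: unit_open_cube_def unit_cube_def less_imp_le)

lemma unit_cube_cbox: "unit_cube = cbox (0 :: real ^ 'n::finite) 1"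
  by (auto simp: unit_cube_def mem_box_cart)

section \<open>Weighted point families\<close>

type_synonym 'n bfamily = "('n bpoly \<times> (real ^ 'n)) list"

definition bernstein_family :: "(real ^ 'n::finite) set \<Rightarrow> 'n bfamily \<Rightarrow> bool" where
  "bernstein_family S F \<longleftrightarrow> (\<forall>(p, z)\<in>set F. is_bernstein_poly p \<and> p \<noteq> [] \<and> z \<in> S)"

definition balanced_at :: "'n::finite bfamily \<Rightarrow> real ^ 'n \<Rightarrow> bool" where
  "balanced_at F x \<longleftrightarrow> F \<noteq> [] \<and> (\<Sum>(p, z)\<leftarrow>F. bpoly_eval p x *\<^sub>R (z - x)) = 0"

lemma balanced_at_barycentre:
  assumes "bernstein_family S F" "x \<in> unit_open_cube" "balanced_at F x"
  shows "0 < (\<Sum>(p, z)\<leftarrow>F. bpoly_eval p x)"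
    and "(\<Sum>(p, z)\<leftarrow>F. bpoly_eval p x *\<^sub>R z) = (\<Sum>(p, z)\<leftarrow>F. bpoly_eval p x) *\<^sub>R x"
proof -
  have "(\<Sum>(p, z)\<leftarrow>F. 0) < (\<Sum>(p, z)\<leftarrow>F. bpoly_eval p x)"
    using assms by (intro sum_list_strict_mono)
      (auto simp: bernstein_family_def balanced_at_def bpoly_eval_pos)
  then show "0 < (\<Sum>(p, z)\<leftarrow>F. bpoly_eval p x)"
    by (simp add: split_def)
  have "(\<Sum>(p, z)\<leftarrow>F. bpoly_eval p x *\<^sub>R z) - (\<Sum>(p, z)\<leftarrow>F. bpoly_eval p x) *\<^sub>R x =
      (\<Sum>(p, z)\<leftarrow>F. bpoly_eval p x *\<^sub>R (z - x))"
    by (simp add: split_def scaleR_sum_list_left sum_list_subtractf[symmetric] scaleR_diff_right)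
  then show "(\<Sum>(p, z)\<leftarrow>F. bpoly_eval p x *\<^sub>R z) = (\<Sum>(p, z)\<leftarrow>F. bpoly_eval p x) *\<^sub>R x"
    using assms(3) by (simp add: balanced_at_def)
qed

definition cube_vertex :: "('n::finite \<Rightarrow> bool) \<Rightarrow> real ^ 'n" where
  "cube_vertex u = (\<chi> i. if u i then 1 else 0)"

definition cube_vertex_mono :: "('n::finite \<Rightarrow> bool) \<Rightarrow> 'n bmono" where
  "cube_vertex_mono u = (\<lambda>i. if u i then 1 else 0, \<lambda>i. if u i then 0 else 1)"

lemma pmf_Pi_bernoulli:
  fixes x :: "real ^ 'n::finite"
  assumes "x \<in> unit_cube"
  shows "pmf (Pi_pmf UNIV False (\<lambda>i. bernoulli_pmf (x $ i))) u = bmono_eval (cube_vertex_mono u) x"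
proof -
  have "pmf (Pi_pmf UNIV False (\<lambda>i. bernoulli_pmf (x $ i))) u = (\<Prod>i\<in>UNIV. pmf (bernoulli_pmf (x $ i)) (u i))"
    by (rule pmf_Pi') auto
  also have "\<dots> = bmono_eval (cube_vertex_mono u) x"
    using assms unfolding bmono_eval_def cube_vertex_mono_def unit_cube_def
    by (intro prod.cong) auto
  finally show ?thesis .
qed

lemma mean_Pi_bernoulli:
  fixes x :: "real ^ 'n::finite"
  assumes "x \<in> unit_cube"
  shows "(\<Sum>u\<in>UNIV. pmf (Pi_pmf UNIV False (\<lambda>i. bernoulli_pmf (x $ i))) u *\<^sub>R cube_vertex u) = x"
proof (subst vec_eq_iff, intro allI)
  fix j
  define Q where "Q = Pi_pmf UNIV False (\<lambda>i. bernoulli_pmf (x $ i))"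
  have "(\<Sum>u\<in>UNIV. pmf Q u *\<^sub>R cube_vertex u) $ j = (\<Sum>u\<in>{u. u j}. pmf Q u)"
    by (simp add: cube_vertex_def sum.inter_filter[symmetric] if_distrib cong: if_cong)
  also have "\<dots> = measure_pmf.prob (map_pmf (\<lambda>u. u j) Q) {True}"
    by (simp add: measure_measure_pmf_finite[symmetric] vimage_def)
  also have "map_pmf (\<lambda>u. u j) Q = bernoulli_pmf (x $ j)"
    unfolding Q_def by (subst Pi_pmf_component) auto
  also have "measure_pmf.prob (bernoulli_pmf (x $ j)) {True} = x $ j"
    using assms by (simp add: measure_pmf_single unit_cube_def)
  finally show "(\<Sum>u\<in>UNIV. pmf Q u *\<^sub>R cube_vertex u) $ j = x $ j" .
qed

lemma cube_bernstein_family: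
  obtains F :: "'n::finite bfamily"
  where "bernstein_family unit_cube F" "\<forall>x\<in>unit_open_cube. balanced_at F x"
proof -
  obtain us :: "('n \<Rightarrow> bool) list" where us: "distinct us" "set us = UNIV"
    using finite_distinct_list[of "UNIV :: ('n \<Rightarrow> bool) set"] by auto
  define F :: "'n bfamily" where "F = [([(1, cube_vertex_mono u)], cube_vertex u). u \<leftarrow> us]"
  have "bernstein_family unit_cube F"
    by (auto simp: F_def bernstein_family_def is_bernstein_poly_def unit_cube_def cube_vertex_def)
  moreover have "\<forall>x\<in>unit_open_cube. balanced_at F x"
  proof
    fix x :: "real ^ 'n"
    assume "x \<in> unit_open_cube"
    then have x: "x \<in> unit_cube"
      using unit_open_cube_subset by blast
    define Q where "Q = Pi_pmf UNIV False (\<lambda>i. bernoulli_pmf (x $ i))"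
    have "(\<Sum>(p, z)\<leftarrow>F. bpoly_eval p x *\<^sub>R (z - x)) = (\<Sum>u\<in>UNIV. pmf Q u *\<^sub>R (cube_vertex u - x))"
      using us by (simp add: F_def Q_def bpoly_eval_def pmf_Pi_bernoulli[OF x] comp_def
          sum_list_distinct_conv_sum_set)
    also have "\<dots> = (\<Sum>u\<in>UNIV. pmf Q u *\<^sub>R cube_vertex u) - (\<Sum>u\<in>UNIV. pmf Q u) *\<^sub>R x"
      by (simp add: scaleR_diff_right sum_subtractf scaleR_sum_left)
    also have "\<dots> = 0"
      using mean_Pi_bernoulli[OF x] by (simp add: Q_def sum_pmf_eq_1)
    finally show "balanced_at F x"
      using us by (auto simp: balanced_at_def F_def)
  qed
  ultimately show thesis
    using that by blast
qed

section \<open>Cutting by hyperplanes\<close>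

(* For affine phi, the point where the line through y and z meets phi = 0. *)
definition hyperplane_crossing :: "('a::real_vector \<Rightarrow> real) \<Rightarrow> 'a \<Rightarrow> 'a \<Rightarrow> 'a" where
  "hyperplane_crossing \<phi> y z = (1 / (\<phi> y - \<phi> z)) *\<^sub>R (\<phi> y *\<^sub>R z - \<phi> z *\<^sub>R y)"

lemma scaleR_hyperplane_crossing:
  "\<phi> y \<noteq> \<phi> z \<Longrightarrow> (\<phi> y - \<phi> z) *\<^sub>R hyperplane_crossing \<phi> y z = \<phi> y *\<^sub>R z - \<phi> z *\<^sub>R y"
  by (simp add: hyperplane_crossing_def)

lemma hyperplane_crossing_drift:
  assumes "\<phi> y \<noteq> \<phi> z"
  shows "(\<phi> y - \<phi> z) *\<^sub>R (hyperplane_crossing \<phi> y z - x) = \<phi> y *\<^sub>R (z - x) - \<phi> z *\<^sub>R (y - x)"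
  using scaleR_hyperplane_crossing[of \<phi> y z, OF assms] by (simp add: algebra_simps)

lemma hyperplane_crossing_in_convex:
  assumes "convex S" "y \<in> S" "z \<in> S" "0 \<le> \<phi> y" "\<phi> z < 0"
  shows "hyperplane_crossing \<phi> y z \<in> S"
proof -
  have "hyperplane_crossing \<phi> y z = (\<phi> y / (\<phi> y - \<phi> z)) *\<^sub>R z + (- \<phi> z / (\<phi> y - \<phi> z)) *\<^sub>R y"
    by (simp add: hyperplane_crossing_def scaleR_diff_right diff_divide_distrib)
  also have "\<dots> \<in> S"
    using assms by (intro convexD) (auto simp: divide_simps)
  finally show ?thesis .
qed

lemma inner_hyperplane_crossing:
  assumes "a \<bullet> y \<noteq> a \<bullet> z"
  shows "a \<bullet> hyperplane_crossing (\<lambda>w. a \<bullet> w - b) y z = b"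
proof -
  let ?c = "hyperplane_crossing (\<lambda>w. a \<bullet> w - b) y z"
  have "(a \<bullet> y - a \<bullet> z) * (a \<bullet> ?c) = a \<bullet> ((a \<bullet> y - a \<bullet> z) *\<^sub>R ?c)"
    by simp
  also have "\<dots> = (a \<bullet> y - a \<bullet> z) * b"
    using assms by (subst scaleR_hyperplane_crossing[where \<phi> = "\<lambda>w. a \<bullet> w - b", simplified])
      (auto simp: algebra_simps)
  finally show ?thesis
    using assms by simp
qed

definition cut_family :: "(real ^ 'n \<Rightarrow> real) \<Rightarrow> 'n::finite bfamily \<Rightarrow> 'n bfamily" where
  "cut_family \<phi> F =
     [(bpoly_smult (\<phi> y - \<phi> z) (bpoly_mult p q), hyperplane_crossing \<phi> y z).
        (p, y) \<leftarrow> filter (\<lambda>(p, y). 0 \<le> \<phi> y) F, (q, z) \<leftarrow> filter (\<lambda>(q, z). \<phi> z < 0) F]"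

lemma bernstein_family_cut:
  assumes F: "bernstein_family S F" and S: "convex S"
  shows "bernstein_family (S \<inter> {z. a \<bullet> z = b}) (cut_family (\<lambda>z. a \<bullet> z - b) F)"
proof -
  define \<phi> where "\<phi> z = a \<bullet> z - b" for z
  have "is_bernstein_poly (bpoly_smult (\<phi> y - \<phi> z) (bpoly_mult p q)) \<and>
      bpoly_smult (\<phi> y - \<phi> z) (bpoly_mult p q) \<noteq> [] \<and>
      hyperplane_crossing \<phi> y z \<in> S \<inter> {z. a \<bullet> z = b}"
    if "(p, y) \<in> set F" "0 \<le> \<phi> y" "(q, z) \<in> set F" "\<phi> z < 0" for p y q z
  proof -
    have "is_bernstein_poly p" "p \<noteq> []" "y \<in> S" "is_bernstein_poly q" "q \<noteq> []" "z \<in> S"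
      using F that by (auto simp: bernstein_family_def)
    moreover have "a \<bullet> y \<noteq> a \<bullet> z"
      using that(2,4) by (simp add: \<phi>_def)
    ultimately show ?thesis
      using that S unfolding \<phi>_def
      by (simp add: is_bernstein_poly_smult is_bernstein_poly_mult bpoly_smult_eq_Nil_iff
          bpoly_mult_eq_Nil_iff hyperplane_crossing_in_convex inner_hyperplane_crossing)
  qed
  then show ?thesis
    unfolding bernstein_family_def cut_family_def \<phi>_def[symmetric] by auto
qed

lemma cut_family_drift:
  assumes "(\<Sum>(p, z)\<leftarrow>F. bpoly_eval p x * \<phi> z) = 0"
  shows "(\<Sum>(r, w)\<leftarrow>cut_family \<phi> F. bpoly_eval r x *\<^sub>R (w - x)) =
    (\<Sum>(p, y)\<leftarrow>filter (\<lambda>(p, y). 0 \<le> \<phi> y) F. bpoly_eval p x * \<phi> y) *\<^sub>R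
    (\<Sum>(p, z)\<leftarrow>F. bpoly_eval p x *\<^sub>R (z - x))"
proof -
  define Fp where "Fp = filter (\<lambda>(p, y). 0 \<le> \<phi> y) F"
  define Fn where "Fn = filter (\<lambda>(q, z). \<phi> z < 0) F"
  define W where "W G = (\<Sum>(p, y)\<leftarrow>G. bpoly_eval p x * \<phi> y)" for G :: "'a bfamily"
  define D where "D G = (\<Sum>(p, y)\<leftarrow>G. bpoly_eval p x *\<^sub>R (y - x))" for G :: "'a bfamily"
  have split: "W Fp + W Fn = W F" "D Fp + D Fn = D F"
    unfolding W_def D_def Fp_def Fn_def split_def by (rule sum_list_filter_sign_split)+
  have "(\<Sum>(r, w)\<leftarrow>cut_family \<phi> F. bpoly_eval r x *\<^sub>R (w - x)) =
      (\<Sum>(p, y)\<leftarrow>Fp. \<Sum>(q, z)\<leftarrow>Fn. (bpoly_eval p x * bpoly_eval q x) *\<^sub>R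
         ((\<phi> y - \<phi> z) *\<^sub>R (hyperplane_crossing \<phi> y z - x)))"
    by (simp add: cut_family_def Fp_def Fn_def sum_list_concat_map split_def comp_def
        bpoly_eval_smult bpoly_eval_mult mult_ac)
  also have "\<dots> = (\<Sum>(p, y)\<leftarrow>Fp. \<Sum>(q, z)\<leftarrow>Fn.
      (bpoly_eval p x * \<phi> y) *\<^sub>R (bpoly_eval q x *\<^sub>R (z - x)) -
      (bpoly_eval q x * \<phi> z) *\<^sub>R (bpoly_eval p x *\<^sub>R (y - x)))"
  proof -
    have "(m * n) *\<^sub>R ((\<phi> y - \<phi> z) *\<^sub>R (hyperplane_crossing \<phi> y z - x)) =
        (m * \<phi> y) *\<^sub>R (n *\<^sub>R (z - x)) - (n * \<phi> z) *\<^sub>R (m *\<^sub>R (y - x))"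
      if "\<phi> y \<noteq> \<phi> z" for m n y z
      unfolding hyperplane_crossing_drift[of \<phi> y z, OF that] by (simp add: algebra_simps)
    then show ?thesis
      by (auto simp: Fp_def Fn_def split_def intro!: arg_cong[where f = sum_list] map_cong)
  qed
  also have "\<dots> = (\<Sum>(p, y)\<leftarrow>Fp. (bpoly_eval p x * \<phi> y) *\<^sub>R D Fn) -
      (\<Sum>(p, y)\<leftarrow>Fp. W Fn *\<^sub>R (bpoly_eval p x *\<^sub>R (y - x)))"
    unfolding W_def D_def split_def
    by (simp only: sum_list_subtractf scaleR_sum_list_left scaleR_sum_list_right)
  also have "\<dots> = W Fp *\<^sub>R D Fn - W Fn *\<^sub>R D Fp"
    by (simp add: W_def[of Fp] D_def[of Fp] split_def scaleR_sum_list_left scaleR_sum_list_right)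
  also have "\<dots> = W Fp *\<^sub>R D F"
  proof -
    have "W Fn = - W Fp"
      using split(1) assms by (simp add: W_def)
    then show ?thesis
      by (simp add: algebra_simps flip: split(2))
  qed
  finally show ?thesis
    by (simp add: W_def D_def Fp_def)
qed

lemma balanced_at_cut_family:
  assumes F: "bernstein_family S F" "balanced_at F x" and x: "x \<in> unit_open_cube" "a \<bullet> x = b"
    and off: "\<exists>(p, z)\<in>set F. a \<bullet> z \<noteq> b"
  shows "balanced_at (cut_family (\<lambda>z. a \<bullet> z - b) F) x"
proof -
  define \<phi> where "\<phi> z = a \<bullet> z - b" for z
  have m_pos: "0 < bpoly_eval p x" if "(p, z) \<in> set F" for p z
    using F(1) x(1) that by (auto simp: bernstein_family_def intro: bpoly_eval_pos)
  have "(\<Sum>(p, z)\<leftarrow>F. bpoly_eval p x * \<phi> z) = a \<bullet> (\<Sum>(p, z)\<leftarrow>F. bpoly_eval p x *\<^sub>R (z - x))"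
    by (simp add: \<phi>_def x(2) inner_sum_list_right split_def inner_diff_right)
  then have W: "(\<Sum>(p, z)\<leftarrow>F. bpoly_eval p x * \<phi> z) = 0"
    using F(2) by (simp add: balanced_at_def)
  obtain p0 z0 where "(p0, z0) \<in> set F" "a \<bullet> z0 \<noteq> b"
    using off by blast
  then have "\<exists>(p, z)\<in>set F. bpoly_eval p x * \<phi> z \<noteq> 0"
    using m_pos[of p0 z0] by (intro bexI[of _ "(p0, z0)"]) (auto simp: \<phi>_def)
  then obtain p y q z where py: "(p, y) \<in> set F" "0 < bpoly_eval p x * \<phi> y"
      and qz: "(q, z) \<in> set F" "bpoly_eval q x * \<phi> z < 0"
    using sum_list_eq_0_signs[OF W[unfolded split_def]] by (force simp: split_def)
  have "0 \<le> \<phi> y" "\<phi> z < 0"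
    using py qz m_pos[OF py(1)] m_pos[OF qz(1)] by (simp_all add: zero_less_mult_iff mult_less_0_iff)
  moreover have "\<exists>w\<in>set F. \<phi> (snd w) < 0"
    using qz(1) \<open>\<phi> z < 0\<close> by (intro bexI[of _ "(q, z)"]) auto
  ultimately have "cut_family \<phi> F \<noteq> []"
    using py(1) unfolding cut_family_def by (auto simp: split_def filter_empty_conv)
  moreover have "(\<Sum>(r, w)\<leftarrow>cut_family \<phi> F. bpoly_eval r x *\<^sub>R (w - x)) = 0"
    using cut_family_drift[OF W] F(2) by (simp add: balanced_at_def)
  ultimately show ?thesis
    by (simp add: balanced_at_def \<phi>_def[abs_def])
qed

lemma bernstein_family_hyperplane:
  assumes F: "bernstein_family S F" "\<forall>x\<in>X. balanced_at F x"
    and S: "convex S" and X: "X \<subseteq> unit_open_cube"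
  obtains G where "bernstein_family (S \<inter> {z. a \<bullet> z = b}) G"
    "\<forall>x\<in>X \<inter> {z. a \<bullet> z = b}. balanced_at G x"
proof (cases "\<forall>(p, z)\<in>set F. a \<bullet> z = b")
  case True
  \<comment> \<open>here the cut family would be empty\<close>
  then have "bernstein_family (S \<inter> {z. a \<bullet> z = b}) F"
    using F(1) by (auto simp: bernstein_family_def)
  with F(2) show ?thesis
    using that by blast
next
  case False
  then have off: "\<exists>(p, z)\<in>set F. a \<bullet> z \<noteq> b"
    by auto
  show ?thesis
  proof (rule that)
    show "bernstein_family (S \<inter> {z. a \<bullet> z = b}) (cut_family (\<lambda>z. a \<bullet> z - b) F)"
      using F(1) S by (rule bernstein_family_cut)
    show "\<forall>x\<in>X \<inter> {z. a \<bullet> z = b}. balanced_at (cut_family (\<lambda>z. a \<bullet> z - b) F) x"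
      using balanced_at_cut_family[OF F(1) _ _ _ off] F(2) X by blast
  qed
qed

lemma bernstein_family_hyperplanes:
  assumes "finite \<H>" "\<forall>h\<in>\<H>. \<exists>a b. h = {x. a \<bullet> x = b}"
  obtains F :: "'n::finite bfamily"
  where "bernstein_family (unit_cube \<inter> \<Inter>\<H>) F" "\<forall>x\<in>unit_open_cube \<inter> \<Inter>\<H>. balanced_at F x"
  using assms
proof (induction arbitrary: thesis rule: finite_induct)
  case empty
  obtain F :: "'n bfamily" where "bernstein_family unit_cube F" "\<forall>x\<in>unit_open_cube. balanced_at F x"
    by (rule cube_bernstein_family)
  then show ?case
    using empty.prems(1) by simp
next
  case (insert h \<H>)
  obtain a b where h: "h = {x. a \<bullet> x = b}"
    using insert.prems(2) by blast
  have hyperplanes: "\<forall>h\<in>\<H>. \<exists>a b. h = {x. a \<bullet> x = b}"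
    using insert.prems(2) by simp
  obtain F where F: "bernstein_family (unit_cube \<inter> \<Inter>\<H>) F"
      "\<forall>x\<in>unit_open_cube \<inter> \<Inter>\<H>. balanced_at F x"
    by (rule insert.IH[OF _ hyperplanes])
  have "convex (\<Inter>\<H>)"
    using hyperplanes by (intro convex_Inter) (auto intro: convex_hyperplane)
  then have convex: "convex (unit_cube \<inter> \<Inter>\<H>)"
    by (simp add: unit_cube_cbox convex_Int)
  obtain G where "bernstein_family (unit_cube \<inter> \<Inter>\<H> \<inter> {z. a \<bullet> z = b}) G"
      "\<forall>x\<in>unit_open_cube \<inter> \<Inter>\<H> \<inter> {z. a \<bullet> z = b}. balanced_at G x"
    by (rule bernstein_family_hyperplane[OF F convex Int_lower1])
  moreover have "unit_cube \<inter> \<Inter>(insert h \<H>) = unit_cube \<inter> \<Inter>\<H> \<inter> {z. a \<bullet> z = b}"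
    "unit_open_cube \<inter> \<Inter>(insert h \<H>) = unit_open_cube \<inter> \<Inter>\<H> \<inter> {z. a \<bullet> z = b}"
    by (auto simp: h)
  ultimately show ?case
    using insert.prems(1) by simp
qed

lemma bernstein_family_affine:
  fixes H :: "(real ^ 'n::finite) set"
  assumes "affine H"
  obtains F where "bernstein_family (unit_cube \<inter> H) F" "\<forall>x\<in>unit_open_cube \<inter> H. balanced_at F x"
proof -
  obtain \<H> where \<H>: "finite \<H>" "affine hull H = \<Inter>\<H>"
      "\<And>h. h \<in> \<H> \<Longrightarrow> \<exists>a b. a \<noteq> 0 \<and> h = {x. a \<bullet> x = b}"
    by (metis affine_hull_finite_intersection_hyperplanes)
  have "affine hull H = H"
    using assms by simp
  with \<H>(2) have "H = \<Inter>\<H>"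
    by simp
  moreover have "\<forall>h\<in>\<H>. \<exists>a b. h = {x. a \<bullet> x = b}"
    using \<H>(3) by blast
  ultimately show ?thesis
    using bernstein_family_hyperplanes[OF \<H>(1)] that by blast
qed

lemma bernstein_family_vertex_polys:
  assumes V: "finite V" and F: "bernstein_family (convex hull V) F"
  obtains P where "\<forall>v\<in>V. is_bernstein_poly (P v)"
    "\<And>x. (\<Sum>v\<in>V. bpoly_eval (P v) x) = (\<Sum>(p, z)\<leftarrow>F. bpoly_eval p x)"
    "\<And>x. (\<Sum>v\<in>V. bpoly_eval (P v) x *\<^sub>R v) = (\<Sum>(p, z)\<leftarrow>F. bpoly_eval p x *\<^sub>R z)"
proof -
  have "\<forall>z\<in>convex hull V. \<exists>\<theta>. (\<forall>v\<in>V. 0 \<le> \<theta> v) \<and> sum \<theta> V = 1 \<and> (\<Sum>v\<in>V. \<theta> v *\<^sub>R v) = z"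
    using V by (simp add: convex_hull_finite)
  then obtain \<theta> where \<theta>: "\<And>z. z \<in> convex hull V \<Longrightarrow>
      (\<forall>v\<in>V. 0 \<le> \<theta> z v) \<and> sum (\<theta> z) V = 1 \<and> (\<Sum>v\<in>V. \<theta> z v *\<^sub>R v) = z"
    by metis
  have \<theta>F: "(\<forall>v\<in>V. 0 \<le> \<theta> z v) \<and> sum (\<theta> z) V = 1 \<and> (\<Sum>v\<in>V. \<theta> z v *\<^sub>R v) = z"
    if "(p, z) \<in> set F" for p z
    using \<theta> F that by (auto simp: bernstein_family_def)
  define P where "P v = concat [bpoly_smult (\<theta> z v) p. (p, z) \<leftarrow> F]" for v
  have eval: "bpoly_eval (P v) x = (\<Sum>(p, z)\<leftarrow>F. \<theta> z v * bpoly_eval p x)" for v x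
    by (simp add: P_def bpoly_eval_concat bpoly_eval_smult split_def comp_def)
  show ?thesis
  proof
    show "\<forall>v\<in>V. is_bernstein_poly (P v)"
      using F \<theta>F by (auto simp: P_def bernstein_family_def
          intro!: is_bernstein_poly_concat is_bernstein_poly_smult)
    fix x
    have "(\<Sum>v\<in>V. bpoly_eval (P v) x) = (\<Sum>(p, z)\<leftarrow>F. (\<Sum>v\<in>V. \<theta> z v) * bpoly_eval p x)"
      by (simp add: eval sum_sum_list_swap split_def sum_distrib_right)
    also have "\<dots> = (\<Sum>(p, z)\<leftarrow>F. bpoly_eval p x)"
      using \<theta>F by (auto intro!: arg_cong[where f = sum_list] map_cong)
    finally show "(\<Sum>v\<in>V. bpoly_eval (P v) x) = (\<Sum>(p, z)\<leftarrow>F. bpoly_eval p x)" .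
    have "(\<Sum>v\<in>V. bpoly_eval (P v) x *\<^sub>R v) =
        (\<Sum>(p, z)\<leftarrow>F. bpoly_eval p x *\<^sub>R (\<Sum>v\<in>V. \<theta> z v *\<^sub>R v))"
      by (simp add: eval sum_sum_list_swap split_def scaleR_sum_list_left scaleR_sum_right mult.commute)
    also have "\<dots> = (\<Sum>(p, z)\<leftarrow>F. bpoly_eval p x *\<^sub>R z)"
      using \<theta>F by (auto intro!: arg_cong[where f = sum_list] map_cong)
    finally show "(\<Sum>v\<in>V. bpoly_eval (P v) x *\<^sub>R v) = (\<Sum>(p, z)\<leftarrow>F. bpoly_eval p x *\<^sub>R z)" .
  qed
qed

section \<open>The Bernoulli race\<close>

lemma pmf_flip_pattern_True:
  assumes "0 \<le> p" "p \<le> 1"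
  shows "pmf (flip_pattern p ts) True = (\<Prod>t\<leftarrow>ts. if t then p else 1 - p)"
proof (induction ts)
  case Nil
  then show ?case by simp
next
  case (Cons t ts)
  have conj: "Collect ((\<and>) True) = {True}" "Collect ((\<and>) False) = {}"
    by auto
  show ?case
    using Cons.IH assms
    by (cases t) (simp_all add: conj pmf_bind pmf_map vimage_def measure_pmf_single)
qed

lemma pmf_monomial_test_True:
  assumes x: "x \<in> unit_cube"
  shows "pmf (monomial_test x m) True = bmono_eval m x"
proof -
  define Q where "Q = Pi_pmf UNIV True
    (\<lambda>i. flip_pattern (x $ i) (replicate (fst m i) True @ replicate (snd m i) False))"
  have all_true: "{f. \<forall>i. f i} = {\<lambda>_. True}"
    by auto
  have "pmf (monomial_test x m) True = pmf Q (\<lambda>_. True)"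
    by (simp add: monomial_test_def Q_def pmf_map vimage_def all_true measure_pmf_single)
  also have "\<dots> = (\<Prod>i\<in>UNIV. pmf (flip_pattern (x $ i)
      (replicate (fst m i) True @ replicate (snd m i) False)) True)"
    unfolding Q_def by (rule pmf_Pi') auto
  also have "\<dots> = bmono_eval m x"
    using x by (simp add: bmono_eval_def unit_cube_def pmf_flip_pattern_True)
  finally show ?thesis .
qed

(* Multiplied out by C, so that the induction never divides by the remaining budget C - c,
   which may vanish. *)
lemma pmf_bind_select_monomial:
  fixes ps :: "(real \<times> 'm) list"
  assumes "\<forall>(c, m)\<in>set ps. 0 < c" "(\<Sum>(c, m)\<leftarrow>ps. c) \<le> C"
  shows "C * pmf (select_monomial C ps \<bind> K) a =
    (\<Sum>(c, m)\<leftarrow>ps. c * pmf (K (Some m)) a) + (C - (\<Sum>(c, m)\<leftarrow>ps. c)) * pmf (K None) a"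
  using assms
proof (induction ps arbitrary: C)
  case Nil
  then show ?case
    by (simp add: bind_return_pmf)
next
  case (Cons cm ps)
  obtain c m where cm: "cm = (c, m)"
    by (cases cm)
  define R where "R = (\<Sum>(c, m)\<leftarrow>ps. c)"
  have c: "0 < c"
    using Cons.prems(1) by (simp add: cm)
  have R: "0 \<le> R" "c + R \<le> C"
    using Cons.prems by (force simp: cm R_def intro!: sum_list_nonneg)+
  then have C: "0 < C" "c / C \<le> 1"
    using c by simp_all
  have "pmf (select_monomial C (cm # ps) \<bind> K) a =
      c / C * pmf (K (Some m)) a + (1 - c / C) * pmf (select_monomial (C - c) ps \<bind> K) a"
    using c C by (simp add: cm bind_assoc_pmf bind_return_pmf pmf_bind)
  then have "C * pmf (select_monomial C (cm # ps) \<bind> K) a =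
      c * pmf (K (Some m)) a + (C - c) * pmf (select_monomial (C - c) ps \<bind> K) a"
    using C by (simp add: field_simps)
  also have "(C - c) * pmf (select_monomial (C - c) ps \<bind> K) a =
      (\<Sum>(c, m)\<leftarrow>ps. c * pmf (K (Some m)) a) + (C - c - R) * pmf (K None) a"
    using Cons.IH Cons.prems R by (simp add: R_def)
  finally show ?case
    by (simp add: cm R_def algebra_simps)
qed

lemma pmf_race_attempt:
  assumes "is_bernstein_poly p" "coeff_sum p \<le> C" "0 < C" "x \<in> unit_cube"
  shows "pmf (select_monomial C p \<bind> (\<lambda>sel. case sel of None \<Rightarrow> return_pmf None
      | Some m \<Rightarrow> map_pmf (\<lambda>ok. if ok then Some v else None) (monomial_test x m))) r =
    (case r of None \<Rightarrow> 1 - bpoly_eval p x / C | Some w \<Rightarrow> if w = v then bpoly_eval p x / C else 0)"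
proof -
  define K where "K sel = (case sel of None \<Rightarrow> return_pmf None
      | Some m \<Rightarrow> map_pmf (\<lambda>ok. if ok then Some v else None) (monomial_test x m))" for sel
  have K: "pmf (K (Some m)) s = (case s of None \<Rightarrow> 1 - bmono_eval m x
      | Some w \<Rightarrow> if w = v then bmono_eval m x else 0)" for m s
  proof -
    have "{b. \<not> b} = {False}" "{b. b} = {True}"
      by auto
    then show ?thesis
      using assms(4) by (cases s) (auto simp: K_def pmf_map vimage_def measure_pmf_single
        pmf_False_conv_True pmf_monomial_test_True)
  qed
  have K_None: "pmf (K None) s = (case s of None \<Rightarrow> 1 | Some w \<Rightarrow> 0)" for s
    by (cases s) (simp_all add: K_def)
  have "C * pmf (select_monomial C p \<bind> K) r =
      (\<Sum>(c, m)\<leftarrow>p. c * pmf (K (Some m)) r) + (C - coeff_sum p) * pmf (K None) r"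
    using pmf_bind_select_monomial[of p C K r] assms(1,2)
    by (simp add: is_bernstein_poly_def coeff_sum_def)
  also have "\<dots> = C * (case r of None \<Rightarrow> 1 - bpoly_eval p x / C
      | Some w \<Rightarrow> if w = v then bpoly_eval p x / C else 0)"
  proof (cases r)
    case None
    have sum_None: "(\<Sum>(c, m)\<leftarrow>p. c * pmf (K (Some m)) None) = coeff_sum p - bpoly_eval p x"
      by (simp add: K bpoly_eval_def coeff_sum_def split_def right_diff_distrib sum_list_subtractf)
    show ?thesis
      using assms(3) by (simp add: sum_None None K_None right_diff_distrib)
  next
    case (Some w)
    have sum_Some: "(\<Sum>(c, m)\<leftarrow>p. c * pmf (K (Some m)) (Some w)) = (if w = v then bpoly_eval p x else 0)"
      by (simp add: K bpoly_eval_def split_def)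
    show ?thesis
      using assms(3) by (simp add: sum_Some Some K_None)
  qed
  finally show ?thesis
    using assms(3) by (simp add: K_def[abs_def])
qed

lemma pmf_race_round:
  assumes V: "finite V" "V \<noteq> {}" and P: "\<forall>v\<in>V. is_bernstein_poly (P v)"
    and C: "\<forall>v\<in>V. coeff_sum (P v) \<le> C" "0 < C" and x: "x \<in> unit_cube"
  shows "pmf (race_round V P C x) (Some w) = (if w \<in> V then bpoly_eval (P w) x else 0) / (C * card V)"
    and "pmf (race_round V P C x) None = 1 - (\<Sum>v\<in>V. bpoly_eval (P v) x) / (C * card V)"
proof -
  have round: "pmf (race_round V P C x) r = (\<Sum>v\<in>V. case r of None \<Rightarrow> 1 - bpoly_eval (P v) x / C
      | Some w \<Rightarrow> if w = v then bpoly_eval (P v) x / C else 0) / card V" for r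
    unfolding race_round_def pmf_bind_pmf_of_set[OF V(2,1)]
    using P C x by (intro arg_cong[where f = "\<lambda>s. s / card V"] sum.cong) (simp_all add: pmf_race_attempt)
  show "pmf (race_round V P C x) (Some w) = (if w \<in> V then bpoly_eval (P w) x else 0) / (C * card V)"
    using V(1) by (simp add: round)
  have "pmf (race_round V P C x) None = (card V - (\<Sum>v\<in>V. bpoly_eval (P v) x) / C) / card V"
    by (simp add: round sum_subtractf sum_divide_distrib)
  then show "pmf (race_round V P C x) None = 1 - (\<Sum>v\<in>V. bpoly_eval (P v) x) / (C * card V)"
    using V by (simp add: diff_divide_distrib)
qed

lemma spmf_loop_until_Some:
  fixes R :: "'a option pmf"
  assumes loop: "F = R \<bind> (\<lambda>r. case r of None \<Rightarrow> F | Some v \<Rightarrow> return_spmf v)"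
    and R: "pmf R None < 1"
  shows "lossless_spmf F" and "spmf F v = pmf R (Some v) / (1 - pmf R None)"
proof -
  have integrable: "integrable (measure_pmf R) (indicator A :: 'a option \<Rightarrow> real)" for A
    by (intro integrable_real_indicator) (simp_all add: less_top[symmetric])
  have unfold: "pmf F r = pmf R None * pmf F r + (case r of None \<Rightarrow> 0 | Some v \<Rightarrow> pmf R (Some v))"
    for r
  proof -
    have "(\<lambda>s. pmf (case s of None \<Rightarrow> F | Some v \<Rightarrow> return_spmf v) r) =
        (\<lambda>s. pmf F r * indicator {None} s + (case r of None \<Rightarrow> 0 | Some v \<Rightarrow> indicator {Some v} s))"
      by (auto split: option.split split_indicator)
    then have "pmf F r = measure_pmf.expectation R
        (\<lambda>s. pmf F r * indicator {None} s + (case r of None \<Rightarrow> 0 | Some v \<Rightarrow> indicator {Some v} s))"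
      by (subst loop) (simp add: pmf_bind)
    then show ?thesis
      by (cases r) (simp_all add: measure_pmf_single integral_add integrable mult.commute)
  qed
  have "(1 - pmf R None) * pmf F None = 0"
    using unfold[of None] by (simp add: algebra_simps)
  then show "lossless_spmf F"
    using R by (simp add: lossless_iff_pmf_None)
  have "(1 - pmf R None) * spmf F v = pmf R (Some v)"
    using unfold[of "Some v"] by (simp add: algebra_simps)
  then show "spmf F v = pmf R (Some v) / (1 - pmf R None)"
    using R by (simp add: field_simps)
qed

lemma bernoulli_race_spmf:
  assumes V: "finite V" and P: "\<forall>v\<in>V. is_bernstein_poly (P v)"
    and C: "\<forall>v\<in>V. coeff_sum (P v) \<le> C" "0 < C" and x: "x \<in> unit_cube"
    and pos: "0 < (\<Sum>v\<in>V. bpoly_eval (P v) x)"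
  shows "lossless_spmf (bernoulli_race V P C x)"
    and "spmf (bernoulli_race V P C x) v =
      (if v \<in> V then bpoly_eval (P v) x / (\<Sum>w\<in>V. bpoly_eval (P w) x) else 0)"
proof -
  define S where "S = (\<Sum>w\<in>V. bpoly_eval (P w) x)"
  have "V \<noteq> {}"
    using pos by auto
  note round = pmf_race_round[OF V this P C x]
  have success: "1 - pmf (race_round V P C x) None = S / (C * card V)"
    using round(2) by (simp add: S_def)
  have "0 < S / (C * card V)"
    using pos C(2) V \<open>V \<noteq> {}\<close> by (simp add: S_def card_gt_0_iff)
  then have less: "pmf (race_round V P C x) None < 1"
    using success by linarith
  have loop: "bernoulli_race V P C x = race_round V P C x \<bind>
      (\<lambda>r. case r of None \<Rightarrow> bernoulli_race V P C x | Some v \<Rightarrow> return_spmf v)"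
    by (rule bernoulli_race.simps)
  show "lossless_spmf (bernoulli_race V P C x)"
    by (rule spmf_loop_until_Some(1)[OF loop less])
  have "spmf (bernoulli_race V P C x) v = pmf (race_round V P C x) (Some v) / (S / (C * card V))"
    using spmf_loop_until_Some(2)[OF loop less] success by simp
  then show "spmf (bernoulli_race V P C x) v =
      (if v \<in> V then bpoly_eval (P v) x / (\<Sum>w\<in>V. bpoly_eval (P w) x) else 0)"
    using round(1)[of v] C(2) V \<open>V \<noteq> {}\<close> by (simp add: S_def[symmetric] card_gt_0_iff)
qed

lemma bernoulli_race_is_factory:
  assumes V: "finite V" and P: "\<forall>v\<in>V. is_bernstein_poly (P v)"
    and C: "\<forall>v\<in>V. coeff_sum (P v) \<le> C" "0 < C"
    and weights: "\<And>x. x \<in> Pol \<inter> unit_open_cube \<Longrightarrow> 0 < (\<Sum>v\<in>V. bpoly_eval (P v) x) \<and>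
      (\<Sum>v\<in>V. bpoly_eval (P v) x *\<^sub>R v) = (\<Sum>v\<in>V. bpoly_eval (P v) x) *\<^sub>R x"
  shows "is_bernoulli_factory_for Pol V (bernoulli_race V P C)"
  unfolding is_bernoulli_factory_for_def
proof (intro ballI conjI)
  fix x
  assume x: "x \<in> Pol \<inter> unit_open_cube"
  define S where "S = (\<Sum>v\<in>V. bpoly_eval (P v) x)"
  have S: "0 < S" "(\<Sum>v\<in>V. bpoly_eval (P v) x *\<^sub>R v) = S *\<^sub>R x"
    using weights[OF x] by (simp_all add: S_def)
  have "x \<in> unit_cube"
    using x unit_open_cube_subset by blast
  note race = bernoulli_race_spmf[OF V P C this S(1)[unfolded S_def]]
  show "lossless_spmf (bernoulli_race V P C x)"
    by (rule race(1))
  show "set_spmf (bernoulli_race V P C x) \<subseteq> V"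
    using race(2) by (auto simp: in_set_spmf_iff_spmf split: if_splits)
  have "(\<Sum>v\<in>V. spmf (bernoulli_race V P C x) v *\<^sub>R v) = (1 / S) *\<^sub>R (\<Sum>v\<in>V. bpoly_eval (P v) x *\<^sub>R v)"
    by (simp add: race(2) S_def[symmetric] scaleR_sum_right)
  then show "(\<Sum>v\<in>V. spmf (bernoulli_race V P C x) v *\<^sub>R v) = x"
    using S by simp
qed

lemma polytope_unit_cube_Int_affine:
  fixes H :: "(real ^ 'n::finite) set"
  assumes "affine H"
  shows "polytope (unit_cube \<inter> H)"
proof -
  have "polyhedron (unit_cube \<inter> H)"
    using assms by (simp add: unit_cube_cbox affine_imp_polyhedron)
  moreover have "bounded (unit_cube \<inter> H)"
    by (simp add: unit_cube_cbox bounded_Int)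
  ultimately show ?thesis
    by (simp add: polytope_eq_bounded_polyhedron)
qed

theorem theorem6p1:
  fixes H :: "(real ^ 'n::finite) set"
  assumes "affine H"
  defines "Pol \<equiv> unit_cube \<inter> H"
  defines "V \<equiv> {v. v extreme_point_of Pol}"
  shows "\<exists>P :: real ^ 'n \<Rightarrow> 'n bpoly.
           (\<forall>v\<in>V. is_bernstein_poly (P v)) \<and>
           (\<forall>C::real. C \<ge> 1 \<and> (\<forall>v\<in>V. coeff_sum (P v) \<le> C) \<longrightarrow>
              is_bernoulli_factory_for Pol V (bernoulli_race V P C))"
proof -
  have "polytope Pol"
    unfolding Pol_def using assms(1) by (rule polytope_unit_cube_Int_affine)
  then have V: "finite V" "Pol = convex hull V"
    unfolding V_def by (simp_all add: polytope_imp_polyhedron finite_polyhedron_extreme_points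
        Krein_Milman_Minkowski polytope_imp_compact polytope_imp_convex)
  obtain F where "bernstein_family (unit_cube \<inter> H) F" "\<forall>x\<in>unit_open_cube \<inter> H. balanced_at F x"
    using bernstein_family_affine[OF assms(1)] by blast
  moreover have "unit_open_cube \<inter> H = Pol \<inter> unit_open_cube"
    using unit_open_cube_subset by (auto simp: Pol_def)
  ultimately have F: "bernstein_family (convex hull V) F" "\<forall>x\<in>Pol \<inter> unit_open_cube. balanced_at F x"
    by (simp_all add: Pol_def[symmetric] V(2)[symmetric])
  obtain P where P: "\<forall>v\<in>V. is_bernstein_poly (P v)"
      "\<And>x. (\<Sum>v\<in>V. bpoly_eval (P v) x) = (\<Sum>(p, z)\<leftarrow>F. bpoly_eval p x)"
      "\<And>x. (\<Sum>v\<in>V. bpoly_eval (P v) x *\<^sub>R v) = (\<Sum>(p, z)\<leftarrow>F. bpoly_eval p x *\<^sub>R z)"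
    using bernstein_family_vertex_polys[OF V(1) F(1)] by blast
  have "0 < (\<Sum>v\<in>V. bpoly_eval (P v) x) \<and>
      (\<Sum>v\<in>V. bpoly_eval (P v) x *\<^sub>R v) = (\<Sum>v\<in>V. bpoly_eval (P v) x) *\<^sub>R x"
    if "x \<in> Pol \<inter> unit_open_cube" for x
    using balanced_at_barycentre[OF F(1)] F(2) that by (simp add: P(2,3))
  then show ?thesis
    using P(1) V(1) by (intro exI[of _ P] conjI allI impI bernoulli_race_is_factory) auto
qed

end
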